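(* Let $\lambda\in\mathbb{R}$, let $r,n\ge0$ be integers and let $z\in\mathbb{C}$. Then \[ \phi_{n+1,\lambda}^{(r)}(|z|^2)=\sum_{k=0}^{n}\binom{n}{k}(-\lambda)^{n-k}(n-k)!\Big(|z|^2\phi_{k,\lambda}^{(r+1)}(|z|^2)+r\,\phi_{k,\lambda}^{(r)}(|z|^2)\Big) =\sum_{k=0}^{n}\binom{n}{k}\big(r(-\lambda)_{k,\lambda}+|z|^2(1-\lambda)_{k,\lambda}\big)\phi_{n-k,\lambda}^{(r)}(|z|^2). \] In particular, for $|z|=1$, \[ \phi_{n+1,\lambda}^{(r)}=\sum_{k=0}^{n}\binom{n}{k}(-\lambda)^{n-k}(n-k)!\Big(\phi_{k,\lambda}^{(r+1)}+r\,\phi_{k,\lambda}^{(r)}\Big)=\sum_{k=0}^{n}\binom{n}{k}\big(r(-\lambda)_{k,\lambda}+(1-\lambda)_{k,\lambda}\big)\phi_{n-k,\lambda}^{(r)}. \]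
   Context: Notation: $(x)_0=1$, $(x)_m=x(x-1)\cdots(x-m+1)$; $(y)_{0,\lambda}=1$, $(y)_{n,\lambda}=y(y-\lambda)\cdots(y-(n-1)\lambda)$. The degenerate $r$-Stirling numbers of the second kind ${n+r\brace k+r}_{r,\lambda}$ are defined by $(x+r)_{n,\lambda}=\sum_{k=0}^{n}{n+r\brace k+r}_{r,\lambda}(x)_k$ ($n\ge0$), and the degenerate $r$-Bell polynomials are $\phi_{n,\lambda}^{(r)}(x)=\sum_{k=0}^{n}{n+r\brace k+r}_{r,\lambda}x^k$, with $\phi_{n,\lambda}^{(r)}=\phi_{n,\lambda}^{(r)}(1)$. *)

theory Defs
  imports Complex_Main
begin

definition deg_fall :: "real \<Rightarrow> real \<Rightarrow> nat \<Rightarrow> real" where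
  "deg_fall y l n = (\<Prod>i<n. y - real i * l)"

definition fall :: "real \<Rightarrow> nat \<Rightarrow> real" where
  "fall x m = (\<Prod>i<m. x - real i)"

text \<open>Degenerate r-Stirling numbers of the second kind {n+r, k+r}_{r,lambda}:
  the (unique) coefficients with (x+r)_{n,lambda} = sum_{k=0}^n S(k) (x)_k for all x,
  extended by 0 for k > n.\<close>
definition dr_stirling2 :: "nat \<Rightarrow> real \<Rightarrow> nat \<Rightarrow> nat \<Rightarrow> real" where
  "dr_stirling2 r l n k =
     (THE c. (\<forall>x. deg_fall (x + real r) l n = (\<Sum>j\<le>n. c j * fall x j))
             \<and> (\<forall>j>n. c j = 0)) k"

definition dr_bell :: "nat \<Rightarrow> real \<Rightarrow> nat \<Rightarrow> real \<Rightarrow> real" where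
  "dr_bell r l n x = (\<Sum>k\<le>n. dr_stirling2 r l n k * x ^ k)"

end

theory Submission imports Defs begin

text \<open>Let U be the linear map on real polynomials in y sending the falling factorial (y)_j to x^j
  (umbral_image x p v says v = U[p]). By the definition of the degenerate r-Stirling numbers,
  \<phi>^{(r)}_{n,\<lambda>}(x) = U[(y+r)_{n,\<lambda>}], and U[y p(y-1)] = x U[p] because y (y-1)_j = (y)_{j+1}.
  Write (y+r)_{n+1,\<lambda>} = (y+r) (y+r-\<lambda>)_{n,\<lambda>} and expand by the Vandermonde convolution
  (a+b)_{n,\<lambda>} = \<Sum>_k C(n,k) (a)_{k,\<lambda>} (b)_{n-k,\<lambda>}, either with a = y+r, b = -\<lambda>, or, after
  splitting y+r = r + y, with a = -\<lambda>, b = y+r and a = 1-\<lambda>, b = y-1+r. Applying U gives the two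
  identities for every real x, in particular for x = |z|^2.\<close>

lemma deg_fall_0 [simp]: "deg_fall a l 0 = 1"
  by (simp add: deg_fall_def)

lemma deg_fall_Suc: "deg_fall a l (Suc n) = deg_fall a l n * (a - real n * l)"
  by (simp add: deg_fall_def)

lemma deg_fall_Suc_shift: "deg_fall a l (Suc n) = a * deg_fall (a - l) l n"
  unfolding deg_fall_def prod.lessThan_Suc_shift by (simp add: algebra_simps)

lemma deg_fall_zero_step_eq_power: "deg_fall a 0 n = a ^ n"
  by (simp add: deg_fall_def)

lemma deg_fall_eq_pochhammer:
  assumes "l \<noteq> 0"
  shows "deg_fall a l n = (- l) ^ n * pochhammer (- a / l) n"
proof -
  have "(- l) ^ n * pochhammer (- a / l) n = (\<Prod>i<n. - l * (- a / l + real i))"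
    by (simp only: pochhammer_prod atLeast0LessThan prod.distrib prod_constant card_lessThan)
  also have "\<dots> = deg_fall a l n"
    unfolding deg_fall_def using assms by (intro prod.cong) (auto simp: field_simps)
  finally show ?thesis ..
qed

lemma deg_fall_self_neg: "deg_fall (- l) l n = (- l) ^ n * fact n"
  by (induction n) (auto simp: deg_fall_Suc algebra_simps)

lemma deg_fall_add:
  "deg_fall (a + b) l n = (\<Sum>k\<le>n. real (n choose k) * deg_fall a l k * deg_fall b l (n - k))"
proof (cases "l = 0")
  case True
  then show ?thesis by (simp add: deg_fall_zero_step_eq_power binomial_ring)
next
  case False
  have "deg_fall (a + b) l n = (- l) ^ n * pochhammer (- a / l + - b / l) n"
    using False by (simp add: deg_fall_eq_pochhammer field_simps)
  also have "\<dots> = (\<Sum>k\<le>n. real (n choose k) * ((- l) ^ k * pochhammer (- a / l) k) *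
                          ((- l) ^ (n - k) * pochhammer (- b / l) (n - k)))"
    unfolding pochhammer_binomial_sum sum_distrib_left
    by (intro sum.cong refl) (simp add: power_add[symmetric])
  finally show ?thesis
    using False by (simp add: deg_fall_eq_pochhammer)
qed

lemma fall_Suc: "fall y (Suc j) = fall y j * (y - real j)"
  by (simp add: fall_def)

lemma fall_Suc_shift: "fall y (Suc j) = y * fall (y - 1) j"
  unfolding fall_def prod.lessThan_Suc_shift by (simp add: algebra_simps)

lemma fall_of_nat_eq_0: "m < j \<Longrightarrow> fall (real m) j = 0"
  unfolding fall_def by (rule prod_zero) auto

lemma fall_of_nat_self_neq_0: "fall (real j) j \<noteq> 0"
  unfolding fall_def by (auto simp: prod_zero_iff)

text \<open>Induction on j, evaluating at y = j: (j)_i vanishes for i > j but not for i = j.\<close>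
lemma fall_sum_eq_0_imp_coeff_eq_0:
  fixes c :: "nat \<Rightarrow> real"
  assumes "\<forall>j>N. c j = 0" and "\<forall>y. (\<Sum>j\<le>N. c j * fall y j) = 0"
  shows "c j = 0"
proof (induction j rule: less_induct)
  case (less j)
  show ?case
  proof (cases "j \<le> N")
    case False
    then show ?thesis using assms(1) by auto
  next
    case True
    have "(\<Sum>i\<le>N. c i * fall (real j) i) = c j * fall (real j) j"
      using True less.IH fall_of_nat_eq_0
      by (intro sum.mono_neutral_right[where S = "{j}", simplified]) (auto simp: nat_neq_iff)
    then show ?thesis using assms(2) fall_of_nat_self_neq_0 by simp
  qed
qed

lemma sum_atMost_extend_coeffs:
  fixes c :: "nat \<Rightarrow> 'a::semiring_0"
  assumes "\<forall>j>N. c j = 0" and "N \<le> M"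
  shows "(\<Sum>j\<le>N. c j * h j) = (\<Sum>j\<le>M. c j * h j)"
  by (rule sum.mono_neutral_left) (use assms in auto)

text \<open>From (x)_j (x + r - n\<lambda>) = (x)_{j+1} + (j + r - n\<lambda>) (x)_j.\<close>
fun dr_stirling2_rec :: "nat \<Rightarrow> real \<Rightarrow> nat \<Rightarrow> nat \<Rightarrow> real" where
  "dr_stirling2_rec r l 0 k = (if k = 0 then 1 else 0)"
| "dr_stirling2_rec r l (Suc n) k =
     (if k = 0 then 0 else dr_stirling2_rec r l n (k - 1))
     + (real k + real r - real n * l) * dr_stirling2_rec r l n k"

lemma dr_stirling2_rec_eq_0: "n < k \<Longrightarrow> dr_stirling2_rec r l n k = 0"
  by (induction n arbitrary: k) auto

lemma deg_fall_eq_sum_dr_stirling2_rec: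
  "deg_fall (x + real r) l n = (\<Sum>j\<le>n. dr_stirling2_rec r l n j * fall x j)"
proof (induction n)
  case 0
  then show ?case by (simp add: fall_def)
next
  case (Suc n)
  let ?S = "dr_stirling2_rec r l n" and ?w = "\<lambda>j. real j + real r - real n * l"
  have "deg_fall (x + real r) l (Suc n) = (\<Sum>j\<le>n. ?S j * fall x j * ((x - real j) + ?w j))"
    unfolding deg_fall_Suc Suc.IH sum_distrib_right by (rule sum.cong) (auto simp: algebra_simps)
  also have "\<dots> = (\<Sum>j\<le>n. ?S j * fall x (Suc j)) + (\<Sum>j\<le>n. ?w j * ?S j * fall x j)"
    by (simp add: sum.distrib[symmetric] fall_Suc algebra_simps)
  also have "(\<Sum>j\<le>n. ?w j * ?S j * fall x j) = (\<Sum>j\<le>Suc n. ?w j * ?S j * fall x j)"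
    by (simp add: dr_stirling2_rec_eq_0)
  also have "(\<Sum>j\<le>n. ?S j * fall x (Suc j)) = (\<Sum>j\<le>Suc n. (if j = 0 then 0 else ?S (j - 1)) * fall x j)"
    by (subst sum.atMost_Suc_shift) simp
  finally show ?case by (simp add: sum.distrib[symmetric] algebra_simps)
qed

lemma dr_stirling2_eq_rec: "dr_stirling2 r l n = dr_stirling2_rec r l n"
  unfolding dr_stirling2_def
proof (rule the_equality)
  fix c
  assume c: "(\<forall>x. deg_fall (x + real r) l n = (\<Sum>j\<le>n. c j * fall x j)) \<and> (\<forall>j>n. c j = 0)"
  have "c j - dr_stirling2_rec r l n j = 0" for j
  proof (rule fall_sum_eq_0_imp_coeff_eq_0[of n "\<lambda>j. c j - dr_stirling2_rec r l n j"])
    show "\<forall>j>n. c j - dr_stirling2_rec r l n j = 0"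
      using c by (simp add: dr_stirling2_rec_eq_0)
    show "\<forall>y. (\<Sum>j\<le>n. (c j - dr_stirling2_rec r l n j) * fall y j) = 0"
      using c by (simp add: left_diff_distrib sum_subtractf deg_fall_eq_sum_dr_stirling2_rec)
  qed
  then show "c = dr_stirling2_rec r l n" by auto
qed (simp add: deg_fall_eq_sum_dr_stirling2_rec dr_stirling2_rec_eq_0)

definition umbral_image :: "real \<Rightarrow> (real \<Rightarrow> real) \<Rightarrow> real \<Rightarrow> bool" where
  "umbral_image x p v \<longleftrightarrow> (\<exists>N c. (\<forall>j>N. c j = 0) \<and> (\<forall>y. p y = (\<Sum>j\<le>N. c j * fall y j))
                                 \<and> v = (\<Sum>j\<le>N. c j * x ^ j))"

lemma umbral_image_common_bound:
  assumes "umbral_image x p v" and "umbral_image x q w"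
  obtains M c d
  where "\<forall>j>M. c j = 0" "\<forall>y. p y = (\<Sum>j\<le>M. c j * fall y j)" "v = (\<Sum>j\<le>M. c j * x ^ j)"
    and "\<forall>j>M. d j = 0" "\<forall>y. q y = (\<Sum>j\<le>M. d j * fall y j)" "w = (\<Sum>j\<le>M. d j * x ^ j)"
proof -
  obtain N1 c where c: "\<forall>j>N1. c j = 0" "\<forall>y. p y = (\<Sum>j\<le>N1. c j * fall y j)"
    "v = (\<Sum>j\<le>N1. c j * x ^ j)"
    using assms(1) unfolding umbral_image_def by blast
  obtain N2 d where d: "\<forall>j>N2. d j = 0" "\<forall>y. q y = (\<Sum>j\<le>N2. d j * fall y j)"
    "w = (\<Sum>j\<le>N2. d j * x ^ j)"
    using assms(2) unfolding umbral_image_def by blast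
  define M where "M = max N1 N2"
  have "(\<Sum>j\<le>N1. c j * h j) = (\<Sum>j\<le>M. c j * h j)"
   and "(\<Sum>j\<le>N2. d j * h j) = (\<Sum>j\<le>M. d j * h j)" for h :: "nat \<Rightarrow> real"
    using sum_atMost_extend_coeffs c(1) d(1) unfolding M_def by (metis max.cobounded1 max.cobounded2)+
  then show thesis
    using that[of M c d] c d unfolding M_def by auto
qed

lemma umbral_image_unique:
  assumes "umbral_image x p v" and "umbral_image x p w"
  shows "v = w"
proof -
  obtain M c d
    where c: "\<forall>j>M. c j = 0" "\<forall>y. p y = (\<Sum>j\<le>M. c j * fall y j)" "v = (\<Sum>j\<le>M. c j * x ^ j)"
      and d: "\<forall>j>M. d j = 0" "\<forall>y. p y = (\<Sum>j\<le>M. d j * fall y j)" "w = (\<Sum>j\<le>M. d j * x ^ j)"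
    using umbral_image_common_bound[OF assms] .
  have "c j - d j = 0" for j
  proof (rule fall_sum_eq_0_imp_coeff_eq_0[of M "\<lambda>j. c j - d j"])
    show "\<forall>j>M. c j - d j = 0" using c(1) d(1) by simp
    show "\<forall>y. (\<Sum>j\<le>M. (c j - d j) * fall y j) = 0"
      using c(2) d(2) by (simp add: left_diff_distrib sum_subtractf)
  qed
  then show ?thesis using c(3) d(3) by simp
qed

lemma umbral_image_deg_fall: "umbral_image x (\<lambda>y. deg_fall (y + real r) l n) (dr_bell r l n x)"
  unfolding umbral_image_def dr_bell_def dr_stirling2_eq_rec
  using deg_fall_eq_sum_dr_stirling2_rec dr_stirling2_rec_eq_0 by blast

lemma umbral_image_zero: "umbral_image x (\<lambda>y. 0) 0"
  unfolding umbral_image_def by (rule exI[of _ 0], rule exI[of _ "\<lambda>j. 0"]) simp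

lemma umbral_image_scale:
  assumes "umbral_image x p v"
  shows "umbral_image x (\<lambda>y. a * p y) (a * v)"
proof -
  obtain N c where "\<forall>j>N. c j = 0" "\<forall>y. p y = (\<Sum>j\<le>N. c j * fall y j)" "v = (\<Sum>j\<le>N. c j * x ^ j)"
    using assms unfolding umbral_image_def by blast
  then show ?thesis
    unfolding umbral_image_def
    by (intro exI[of _ N] exI[of _ "\<lambda>j. a * c j"]) (simp add: sum_distrib_left mult.assoc)
qed

lemma umbral_image_add:
  assumes "umbral_image x p v" and "umbral_image x q w"
  shows "umbral_image x (\<lambda>y. p y + q y) (v + w)"
proof -
  obtain M c d
    where "\<forall>j>M. c j = 0" "\<forall>y. p y = (\<Sum>j\<le>M. c j * fall y j)" "v = (\<Sum>j\<le>M. c j * x ^ j)"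
      and "\<forall>j>M. d j = 0" "\<forall>y. q y = (\<Sum>j\<le>M. d j * fall y j)" "w = (\<Sum>j\<le>M. d j * x ^ j)"
    using umbral_image_common_bound[OF assms] .
  then show ?thesis
    unfolding umbral_image_def
    by (intro exI[of _ M] exI[of _ "\<lambda>j. c j + d j"]) (simp add: distrib_right sum.distrib)
qed

lemma umbral_image_sum:
  assumes "finite A" and "\<And>k. k \<in> A \<Longrightarrow> umbral_image x (p k) (v k)"
  shows "umbral_image x (\<lambda>y. \<Sum>k\<in>A. p k y) (\<Sum>k\<in>A. v k)"
  using assms by (induction A rule: finite_induct) (simp_all add: umbral_image_zero umbral_image_add)

lemma umbral_image_shift:
  assumes "umbral_image x p v"
  shows "umbral_image x (\<lambda>y. y * p (y - 1)) (x * v)"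
proof -
  obtain N c where c: "\<forall>j>N. c j = 0" "\<forall>y. p y = (\<Sum>j\<le>N. c j * fall y j)" "v = (\<Sum>j\<le>N. c j * x ^ j)"
    using assms unfolding umbral_image_def by blast
  define d where "d j = (if j = 0 then 0 else c (j - 1))" for j
  have shift: "(\<Sum>j\<le>Suc N. d j * h j) = (\<Sum>j\<le>N. c j * h (Suc j))" for h :: "nat \<Rightarrow> real"
    unfolding d_def by (subst sum.atMost_Suc_shift) simp
  have "y * p (y - 1) = (\<Sum>j\<le>Suc N. d j * fall y j)" for y
    unfolding shift fall_Suc_shift using c(2) by (simp add: sum_distrib_left algebra_simps)
  moreover have "x * v = (\<Sum>j\<le>Suc N. d j * x ^ j)"
    unfolding shift using c(3) by (simp add: sum_distrib_left algebra_simps)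
  moreover have "\<forall>j>Suc N. d j = 0"
    using c(1) by (simp add: d_def)
  ultimately show ?thesis
    unfolding umbral_image_def by blast
qed

lemma deg_fall_Suc_binomial_fact:
  "deg_fall (y + real r) l (n + 1)
     = (\<Sum>k\<le>n. real (n choose k) * (- l) ^ (n - k) * fact (n - k) *
          (y * deg_fall (y - 1 + real (r + 1)) l k + real r * deg_fall (y + real r) l k))"
proof -
  have "deg_fall (y + real r) l (n + 1) = (y + real r) * deg_fall ((y + real r) + - l) l n"
    by (simp add: deg_fall_Suc_shift)
  also have "\<dots> = (y + real r) *
      (\<Sum>k\<le>n. real (n choose k) * deg_fall (y + real r) l k * ((- l) ^ (n - k) * fact (n - k)))"
    by (simp only: deg_fall_add deg_fall_self_neg)
  finally show ?thesis
    by (simp add: sum_distrib_left algebra_simps)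
qed

lemma deg_fall_Suc_binomial_deg_fall:
  "deg_fall (y + real r) l (n + 1)
     = (\<Sum>k\<le>n. real (n choose k) *
          (real r * deg_fall (- l) l k * deg_fall (y + real r) l (n - k)
           + deg_fall (1 - l) l k * (y * deg_fall (y - 1 + real r) l (n - k))))"
proof -
  have "deg_fall (y + real r) l (n + 1)
      = real r * deg_fall (- l + (y + real r)) l n + y * deg_fall ((1 - l) + (y - 1 + real r)) l n"
    by (simp add: deg_fall_Suc_shift algebra_simps)
  also have "\<dots> = (\<Sum>k\<le>n. real (n choose k) *
          (real r * deg_fall (- l) l k * deg_fall (y + real r) l (n - k)
           + deg_fall (1 - l) l k * (y * deg_fall (y - 1 + real r) l (n - k))))"
    unfolding deg_fall_add[of "- l"] deg_fall_add[of "1 - l"]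
    by (simp add: sum_distrib_left sum.distrib algebra_simps)
  finally show ?thesis .
qed

lemma dr_bell_Suc_binomial_fact:
  "dr_bell r l (n + 1) x
     = (\<Sum>k\<le>n. real (n choose k) * (- l) ^ (n - k) * fact (n - k) *
          (x * dr_bell (r + 1) l k x + real r * dr_bell r l k x))"
proof -
  have "umbral_image x
      (\<lambda>y. \<Sum>k\<le>n. real (n choose k) * (- l) ^ (n - k) * fact (n - k) *
          (y * deg_fall (y - 1 + real (r + 1)) l k + real r * deg_fall (y + real r) l k))
      (\<Sum>k\<le>n. real (n choose k) * (- l) ^ (n - k) * fact (n - k) *
          (x * dr_bell (r + 1) l k x + real r * dr_bell r l k x))"
    by (intro umbral_image_sum umbral_image_scale umbral_image_add
          umbral_image_shift[OF umbral_image_deg_fall] umbral_image_deg_fall) simp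
  then have "umbral_image x (\<lambda>y. deg_fall (y + real r) l (n + 1))
      (\<Sum>k\<le>n. real (n choose k) * (- l) ^ (n - k) * fact (n - k) *
          (x * dr_bell (r + 1) l k x + real r * dr_bell r l k x))"
    unfolding deg_fall_Suc_binomial_fact .
  then show ?thesis
    by (rule umbral_image_unique[OF umbral_image_deg_fall])
qed

lemma dr_bell_Suc_binomial_deg_fall:
  "dr_bell r l (n + 1) x
     = (\<Sum>k\<le>n. real (n choose k) * (real r * deg_fall (- l) l k + x * deg_fall (1 - l) l k) *
          dr_bell r l (n - k) x)"
proof -
  have "umbral_image x
      (\<lambda>y. \<Sum>k\<le>n. real (n choose k) *
          (real r * deg_fall (- l) l k * deg_fall (y + real r) l (n - k)
           + deg_fall (1 - l) l k * (y * deg_fall (y - 1 + real r) l (n - k))))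
      (\<Sum>k\<le>n. real (n choose k) *
          (real r * deg_fall (- l) l k * dr_bell r l (n - k) x
           + deg_fall (1 - l) l k * (x * dr_bell r l (n - k) x)))"
    by (intro umbral_image_sum umbral_image_scale umbral_image_add
          umbral_image_shift[OF umbral_image_deg_fall] umbral_image_deg_fall) simp
  then have "umbral_image x (\<lambda>y. deg_fall (y + real r) l (n + 1))
      (\<Sum>k\<le>n. real (n choose k) *
          (real r * deg_fall (- l) l k * dr_bell r l (n - k) x
           + deg_fall (1 - l) l k * (x * dr_bell r l (n - k) x)))"
    unfolding deg_fall_Suc_binomial_deg_fall .
  then have "dr_bell r l (n + 1) x = \<dots>"
    by (rule umbral_image_unique[OF umbral_image_deg_fall])
  then show ?thesis
    by (simp add: algebra_simps)
qed

theorem theorem9: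
  fixes l :: real and r n :: nat and z :: complex
  shows "dr_bell r l (n + 1) ((cmod z)\<^sup>2)
           = (\<Sum>k\<le>n. real (n choose k) * (- l) ^ (n - k) * fact (n - k) *
                ((cmod z)\<^sup>2 * dr_bell (r + 1) l k ((cmod z)\<^sup>2) + real r * dr_bell r l k ((cmod z)\<^sup>2)))
         \<and> dr_bell r l (n + 1) ((cmod z)\<^sup>2)
           = (\<Sum>k\<le>n. real (n choose k) *
                (real r * deg_fall (- l) l k + (cmod z)\<^sup>2 * deg_fall (1 - l) l k) *
                dr_bell r l (n - k) ((cmod z)\<^sup>2))
         \<and> (cmod z = 1 \<longrightarrow>
             dr_bell r l (n + 1) 1
               = (\<Sum>k\<le>n. real (n choose k) * (- l) ^ (n - k) * fact (n - k) *
                    (dr_bell (r + 1) l k 1 + real r * dr_bell r l k 1))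
             \<and> dr_bell r l (n + 1) 1
               = (\<Sum>k\<le>n. real (n choose k) *
                    (real r * deg_fall (- l) l k + deg_fall (1 - l) l k) * dr_bell r l (n - k) 1))"
  using dr_bell_Suc_binomial_fact[of r l n "(cmod z)\<^sup>2"] dr_bell_Suc_binomial_deg_fall[of r l n "(cmod z)\<^sup>2"]
    dr_bell_Suc_binomial_fact[of r l n 1] dr_bell_Suc_binomial_deg_fall[of r l n 1]
  by simp

end
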